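(* Let $\vartheta$ be a primitive semi-compatible random substitution with PF eigenvalue $\lambda$, let $K=\max_{1\leqslant i\leqslant n}\ell_{1,i}$, and for $N\in\mathbb N$ let $I_N=\vartheta(\mathcal L)\cap\mathcal L_N$. For every $\varepsilon>0$ with $\lambda>\varepsilon nK$ there is $N_0\in\mathbb N$ such that for all $N\geqslant N_0$, \[ I_N\;\subset\;\bigcup_{m=\lceil N/(\lambda+\varepsilon nK)\rceil}^{\lfloor N/(\lambda-\varepsilon nK)\rfloor}\vartheta(\mathcal L_m). \]
   Context: Let $\mathcal A=\{a_1,\dots,a_n\}$ be a finite alphabet ($n=\#\mathcal A$), $\mathcal A^+$ the finite non-empty words over $\mathcal A$. A random substitution is a map $\vartheta$ from $\mathcal A$ to finite non-empty subsets of $\mathcal A^+$, extended to words by $\vartheta(u_1\cdots u_m)=\{w_1\cdots w_m: w_k\in\vartheta(u_k)\}$ and to sets of words by unions; powers $\vartheta^m$ are compositions. $|u|$ is the length and $|u|_a$ the number of occurrences of letter $a$ in $u$; $\Phi(u)=(|u|_{a_1},\dots,|u|_{a_n})^\intercal$. $\vartheta$ is semi-compatible if for each $a$ all words in $\vartheta(a)$ have the same $\Phi$; then all words in $\vartheta(a_i)$ have common length $\ell_{1,i}$. Substitution matrix: $M_{ij}=|u|_{a_i}$, $u\in\vartheta(a_j)$; $\vartheta$ is primitive if $M$ is primitive, with Perron–Frobenius eigenvalue $\lambda$. The language $\mathcal L$ is the set of all subwords of words in $\vartheta^m(a)$, $a\in\mathcal A$, $m\in\mathbb N$, and $\mathcal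 L_\ell=\{v\in\mathcal L:|v|=\ell\}$. *)

theory Defs
  imports Complex_Main "HOL-Library.Sublist"
begin

text \<open>Alphabet = finite type 'a (so n = CARD('a)); words = lists over 'a.
  A random substitution maps each letter to a set of words.\<close>

definition random_substitution :: "('a \<Rightarrow> 'a list set) \<Rightarrow> bool" where
  "random_substitution \<theta> \<longleftrightarrow> (\<forall>a. finite (\<theta> a) \<and> \<theta> a \<noteq> {} \<and> [] \<notin> \<theta> a)"

fun subst_word :: "('a \<Rightarrow> 'a list set) \<Rightarrow> 'a list \<Rightarrow> 'a list set" where
  "subst_word \<theta> [] = {[]}"
| "subst_word \<theta> (x # xs) = {w @ v | w v. w \<in> \<theta> x \<and> v \<in> subst_word \<theta> xs}"

definition subst_set :: "('a \<Rightarrow> 'a list set) \<Rightarrow> 'a list set \<Rightarrow> 'a list set" where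
  "subst_set \<theta> S = (\<Union>u\<in>S. subst_word \<theta> u)"

definition subst_pow :: "('a \<Rightarrow> 'a list set) \<Rightarrow> nat \<Rightarrow> 'a \<Rightarrow> 'a list set" where
  "subst_pow \<theta> m a = (subst_set \<theta> ^^ m) {[a]}"

definition semi_compatible :: "('a \<Rightarrow> 'a list set) \<Rightarrow> bool" where
  "semi_compatible \<theta> \<longleftrightarrow>
     (\<forall>a u v. u \<in> \<theta> a \<longrightarrow> v \<in> \<theta> a \<longrightarrow> (\<forall>b. count_list u b = count_list v b))"

text \<open>Common length l_{1,a} of the words in theta(a).\<close>
definition ell1 :: "('a \<Rightarrow> 'a list set) \<Rightarrow> 'a \<Rightarrow> nat" where
  "ell1 \<theta> a = length (SOME u. u \<in> \<theta> a)"

definition subst_matrix :: "('a \<Rightarrow> 'a list set) \<Rightarrow> 'a \<Rightarrow> 'a \<Rightarrow> nat" where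
  "subst_matrix \<theta> b a = count_list (SOME u. u \<in> \<theta> a) b"

fun mat_pow :: "('a::finite \<Rightarrow> 'a \<Rightarrow> nat) \<Rightarrow> nat \<Rightarrow> 'a \<Rightarrow> 'a \<Rightarrow> nat" where
  "mat_pow M 0 = (\<lambda>i j. if i = j then 1 else 0)"
| "mat_pow M (Suc k) = (\<lambda>i j. \<Sum>l\<in>UNIV. mat_pow M k i l * M l j)"

definition primitive_matrix :: "('a::finite \<Rightarrow> 'a \<Rightarrow> nat) \<Rightarrow> bool" where
  "primitive_matrix M \<longleftrightarrow> (\<exists>k>0. \<forall>i j. mat_pow M k i j > 0)"

definition primitive_subst :: "('a::finite \<Rightarrow> 'a list set) \<Rightarrow> bool" where
  "primitive_subst \<theta> \<longleftrightarrow> primitive_matrix (subst_matrix \<theta>)"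

definition is_eigenvalue :: "('a::finite \<Rightarrow> 'a \<Rightarrow> nat) \<Rightarrow> complex \<Rightarrow> bool" where
  "is_eigenvalue M \<mu> \<longleftrightarrow>
     (\<exists>v :: 'a \<Rightarrow> complex. v \<noteq> (\<lambda>_. 0) \<and> (\<forall>i. (\<Sum>j\<in>UNIV. of_nat (M i j) * v j) = \<mu> * v i))"

text \<open>Perron-Frobenius eigenvalue = spectral radius (dominant eigenvalue) of a primitive matrix.\<close>
definition pf_eigenvalue :: "('a::finite \<Rightarrow> 'a \<Rightarrow> nat) \<Rightarrow> real" where
  "pf_eigenvalue M = Sup {cmod \<mu> | \<mu>. is_eigenvalue M \<mu>}"

definition language :: "('a \<Rightarrow> 'a list set) \<Rightarrow> 'a list set" where
  "language \<theta> = {v. v \<noteq> [] \<and> (\<exists>a m w. w \<in> subst_pow \<theta> m a \<and> sublist v w)}"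

definition language_len :: "('a \<Rightarrow> 'a list set) \<Rightarrow> nat \<Rightarrow> 'a list set" where
  "language_len \<theta> l = {v \<in> language \<theta>. length v = l}"

end

theory Submission
  imports Defs "HOL-Analysis.Analysis"
begin

text \<open>
  By semi-compatibility all words of \<open>\<vartheta>(u)\<close> have the same length
  \<open>\<Sum>\<^sub>a |u|\<^sub>a \<ell>\<^sub>1\<^sub>,\<^sub>a\<close>, and the words of \<open>\<vartheta>\<^sup>k(c)\<close> have as length the \<open>c\<close>-th column sum of
  \<open>M\<^sup>k\<close> and as image length that of \<open>M\<^sup>k\<^sup>+\<^sup>1\<close>. For primitive \<open>M\<close> the ratio of consecutive
  column sums tends to \<open>\<lambda>\<close>: each ratio is a weighted average of the previous ones, and
  positivity of \<open>M\<^sup>p\<close> makes their spread contract; a positive eigenvector built from the row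
  sums identifies the limit with the spectral radius. A long legal word lies inside some
  \<open>\<vartheta>\<^sup>m(a)\<close> with \<open>m \<ge> k\<close>, so up to two pieces of bounded length it is a concatenation of
  blocks from the sets \<open>\<vartheta>\<^sup>k(c)\<close>. Hence \<open>|\<vartheta>(u)| = (\<lambda> \<plusminus> \<eta>)|u|\<close> for long legal \<open>u\<close>, and
  \<open>|\<vartheta>(u)| = N\<close> confines \<open>|u|\<close> to \<open>[N/(\<lambda>+\<eta>), N/(\<lambda>-\<eta>)]\<close>.
\<close>

section \<open>Powers and column sums of nonnegative integer matrices\<close>

lemma mat_pow_add:
  "mat_pow M (a + b) i j = (\<Sum>l\<in>UNIV. mat_pow M a i l * mat_pow M b l j)"
proof (induction b arbitrary: j)
  case 0
  then show ?case by (simp add: if_distrib cong: if_cong)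
next
  case (Suc b)
  have "mat_pow M (a + Suc b) i j = (\<Sum>m\<in>UNIV. (\<Sum>l\<in>UNIV. mat_pow M a i l * mat_pow M b l m) * M m j)"
    using Suc by simp
  also have "\<dots> = (\<Sum>m\<in>UNIV. \<Sum>l\<in>UNIV. mat_pow M a i l * (mat_pow M b l m * M m j))"
    by (simp add: sum_distrib_right mult.assoc)
  also have "\<dots> = (\<Sum>l\<in>UNIV. \<Sum>m\<in>UNIV. mat_pow M a i l * (mat_pow M b l m * M m j))"
    by (rule sum.swap)
  also have "\<dots> = (\<Sum>l\<in>UNIV. mat_pow M a i l * (\<Sum>m\<in>UNIV. mat_pow M b l m * M m j))"
    by (simp add: sum_distrib_left)
  finally show ?case by simp
qed

lemma mat_pow_1: "mat_pow M 1 i j = M i j"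
proof -
  have "mat_pow M 1 i j = (\<Sum>l\<in>UNIV. (if i = l then 1 else 0) * M l j)"
    by simp
  also have "\<dots> = (\<Sum>l\<in>UNIV. if i = l then M l j else 0)"
    by (intro sum.cong) auto
  finally show ?thesis by simp
qed

lemma mat_pow_Suc_left: "mat_pow M (Suc k) i j = (\<Sum>l\<in>UNIV. M i l * mat_pow M k l j)"
  unfolding Suc_eq_plus1_left mat_pow_add mat_pow_1 ..

definition mat_transpose :: "('a \<Rightarrow> 'b \<Rightarrow> 'c) \<Rightarrow> 'b \<Rightarrow> 'a \<Rightarrow> 'c" where
  "mat_transpose M i j = M j i"

lemma mat_pow_transpose: "mat_pow (mat_transpose M) k i j = mat_pow M k j i"
proof (induction k arbitrary: i j)
  case (Suc k)
  have "mat_pow (mat_transpose M) (Suc k) i j = (\<Sum>l\<in>UNIV. mat_pow M k l i * M j l)"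
    by (simp add: Suc.IH mat_transpose_def)
  also have "\<dots> = mat_pow M (Suc k) j i"
    unfolding mat_pow_Suc_left by (simp add: mult.commute)
  finally show ?case .
qed simp

lemma primitive_matrix_transpose:
  "primitive_matrix M \<Longrightarrow> primitive_matrix (mat_transpose M)"
  unfolding primitive_matrix_def mat_pow_transpose by blast

lemma primitive_matrix_column_nonzero:
  assumes "primitive_matrix M"
  shows "\<exists>l. M l c > 0"
proof (rule ccontr)
  assume "\<nexists>l. M l c > 0"
  then have "mat_pow M (Suc k) c c = 0" for k by simp
  moreover obtain k where "mat_pow M (Suc k) c c > 0"
    using assms unfolding primitive_matrix_def by (metis gr0_conv_Suc)
  ultimately show False by (metis less_irrefl)
qed

definition colsum :: "('a::finite \<Rightarrow> 'a \<Rightarrow> nat) \<Rightarrow> nat \<Rightarrow> 'a \<Rightarrow> real" where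
  "colsum M k c = (\<Sum>b\<in>UNIV. real (mat_pow M k b c))"

lemma colsum_add: "colsum M (a + b) c = (\<Sum>l\<in>UNIV. colsum M a l * real (mat_pow M b l c))"
proof -
  have "colsum M (a + b) c = (\<Sum>i\<in>UNIV. \<Sum>l\<in>UNIV. real (mat_pow M a i l) * real (mat_pow M b l c))"
    unfolding colsum_def mat_pow_add by simp
  also have "\<dots> = (\<Sum>l\<in>UNIV. \<Sum>i\<in>UNIV. real (mat_pow M a i l) * real (mat_pow M b l c))"
    by (rule sum.swap)
  finally show ?thesis by (simp add: colsum_def sum_distrib_right)
qed

lemma colsum_Suc: "colsum M (Suc k) c = (\<Sum>l\<in>UNIV. colsum M k l * real (M l c))"
  using colsum_add[of M k 1 c] unfolding mat_pow_1 by simp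

lemma sum_colsum_transpose: "(\<Sum>c\<in>UNIV. colsum (mat_transpose M) k c) = (\<Sum>c\<in>UNIV. colsum M k c)"
  unfolding colsum_def mat_pow_transpose by (rule sum.swap)

lemma colsum_nonneg: "0 \<le> colsum M k c"
  by (simp add: colsum_def sum_nonneg)

lemma colsum_pos:
  assumes "primitive_matrix M"
  shows "colsum M k c > 0"
proof (induction k arbitrary: c)
  case 0
  have "colsum M 0 c = (\<Sum>b\<in>UNIV. if b = c then 1 else 0)"
    unfolding colsum_def by (rule sum.cong) auto
  then show ?case by simp
next
  case (Suc k)
  obtain l where "M l c > 0" using primitive_matrix_column_nonzero[OF assms] by blast
  then have "0 < colsum M k l * real (M l c)" using Suc by simp
  also have "\<dots> \<le> (\<Sum>l\<in>UNIV. colsum M k l * real (M l c))"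
    by (rule member_le_sum) (simp_all add: Suc.IH less_imp_le)
  finally show ?case by (simp add: colsum_Suc)
qed

section \<open>Column-sum ratios converge to the Perron--Frobenius eigenvalue\<close>

lemma weighted_average_bounds:
  fixes x a :: "'a::finite \<Rightarrow> real"
  assumes a: "\<And>l. 0 \<le> a l" and ga: "\<And>l. g * sum a UNIV \<le> a l"
    and x: "\<And>l. lo \<le> x l \<and> x l \<le> hi" and l1: "x l1 = lo" and l2: "x l2 = hi"
  shows "(lo + g * (hi - lo)) * sum a UNIV \<le> (\<Sum>l\<in>UNIV. x l * a l)"
    and "(\<Sum>l\<in>UNIV. x l * a l) \<le> (hi - g * (hi - lo)) * sum a UNIV"
proof -
  have "lo \<le> hi" using x[of l1] by simp
  then have "(hi - lo) * (g * sum a UNIV) \<le> (hi - lo) * a l" for l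
    using ga[of l] by (intro mult_left_mono) auto
  then have gap: "g * (hi - lo) * sum a UNIV \<le> (hi - lo) * a l" for l
    by (simp add: ac_simps)
  have "(x l2 - lo) * a l2 \<le> (\<Sum>l\<in>UNIV. (x l - lo) * a l)"
    by (rule member_le_sum) (use a x in auto)
  moreover have "(\<Sum>l\<in>UNIV. x l * a l) = lo * sum a UNIV + (\<Sum>l\<in>UNIV. (x l - lo) * a l)"
    by (simp add: sum_distrib_left left_diff_distrib sum_subtractf)
  ultimately show "(lo + g * (hi - lo)) * sum a UNIV \<le> (\<Sum>l\<in>UNIV. x l * a l)"
    using gap[of l2] l2 by (simp add: distrib_right)
  have "(hi - x l1) * a l1 \<le> (\<Sum>l\<in>UNIV. (hi - x l) * a l)"
    by (rule member_le_sum) (use a x in auto)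
  moreover have "(\<Sum>l\<in>UNIV. x l * a l) = hi * sum a UNIV - (\<Sum>l\<in>UNIV. (hi - x l) * a l)"
    by (simp add: sum_distrib_left left_diff_distrib sum_subtractf)
  ultimately show "(\<Sum>l\<in>UNIV. x l * a l) \<le> (hi - g * (hi - lo)) * sum a UNIV"
    using gap[of l1] l1 by (simp add: left_diff_distrib)
qed

definition col_ratio :: "('a::finite \<Rightarrow> 'a \<Rightarrow> nat) \<Rightarrow> nat \<Rightarrow> 'a \<Rightarrow> real" where
  "col_ratio M k c = colsum M (Suc k) c / colsum M k c"

definition ratio_spread :: "('a::finite \<Rightarrow> 'a \<Rightarrow> nat) \<Rightarrow> nat \<Rightarrow> real" where
  "ratio_spread M k = Max (range (col_ratio M k)) - Min (range (col_ratio M k))"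

lemma col_ratio_weighted_bounds:
  fixes M :: "'a::finite \<Rightarrow> 'a \<Rightarrow> nat" and k :: nat
  defines "lo \<equiv> Min (range (col_ratio M k))" and "hi \<equiv> Max (range (col_ratio M k))"
  assumes prim: "primitive_matrix M"
    and weights: "\<And>l. g * colsum M (k + j) c \<le> colsum M k l * real (mat_pow M j l c)"
  shows "lo + g * (hi - lo) \<le> col_ratio M (k + j) c \<and> col_ratio M (k + j) c \<le> hi - g * (hi - lo)"
proof -
  define a where "a l = colsum M k l * real (mat_pow M j l c)" for l
  have S: "sum a UNIV = colsum M (k + j) c"
    by (simp add: a_def colsum_add)
  have "colsum M (Suc k) l = col_ratio M k l * colsum M k l" for l
    using colsum_pos[OF prim, of k l] by (simp add: col_ratio_def)
  then have num: "colsum M (Suc (k + j)) c = (\<Sum>l\<in>UNIV. col_ratio M k l * a l)"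
    using colsum_add[of M "Suc k" j c] by (simp add: a_def mult.assoc)
  have "lo \<in> range (col_ratio M k)" "hi \<in> range (col_ratio M k)"
    unfolding lo_def hi_def by (auto intro: Min_in Max_in)
  then obtain l1 l2 where l1: "col_ratio M k l1 = lo" and l2: "col_ratio M k l2 = hi"
    by blast
  have "lo \<le> col_ratio M k l \<and> col_ratio M k l \<le> hi" for l
    unfolding lo_def hi_def by simp
  moreover have "0 \<le> a l" for l
    using colsum_pos[OF prim, of k l] by (simp add: a_def)
  moreover have "g * sum a UNIV \<le> a l" for l
    using weights[of l] unfolding S by (simp add: a_def)
  ultimately have "(lo + g * (hi - lo)) * sum a UNIV \<le> colsum M (Suc (k + j)) c"
    and "colsum M (Suc (k + j)) c \<le> (hi - g * (hi - lo)) * sum a UNIV"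
    using weighted_average_bounds[of a g lo "col_ratio M k" hi, OF _ _ _ l1 l2] num by auto
  moreover have "sum a UNIV > 0"
    using S colsum_pos[OF prim] by simp
  ultimately show ?thesis
    by (simp add: col_ratio_def S le_divide_eq divide_le_eq)
qed

lemma colsum_comparable:
  assumes "\<And>l c. 1 \<le> real (mat_pow M p l c) \<and> real (mat_pow M p l c) \<le> q"
  shows "(\<Sum>d\<in>UNIV. colsum M i d) \<le> colsum M (i + p) l \<and> colsum M (i + p) l \<le> q * (\<Sum>d\<in>UNIV. colsum M i d)"
proof -
  have "colsum M (i + p) l = (\<Sum>d\<in>UNIV. colsum M i d * real (mat_pow M p d l))"
    by (rule colsum_add)
  moreover have "(\<Sum>d\<in>UNIV. colsum M i d * 1) \<le> (\<Sum>d\<in>UNIV. colsum M i d * real (mat_pow M p d l))"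
    and "(\<Sum>d\<in>UNIV. colsum M i d * real (mat_pow M p d l)) \<le> (\<Sum>d\<in>UNIV. colsum M i d * q)"
    using assms by (intro sum_mono mult_left_mono; simp add: colsum_nonneg)+
  ultimately show ?thesis by (simp add: sum_distrib_left mult.commute)
qed

text \<open>
  Once \<open>k \<ge> p\<close> all column sums of \<open>M\<^sup>k\<close> are comparable, so each ratio at time \<open>k + p\<close>
  is an average of the ratios at time \<open>k\<close> in which every weight is at least a fixed
  fraction \<open>g\<close> of the total.
\<close>
lemma ratio_spread_contracts:
  fixes M :: "'a::finite \<Rightarrow> 'a \<Rightarrow> nat"
  assumes prim: "primitive_matrix M"
  obtains p and \<kappa> :: real
  where "\<kappa> < 1" and "\<And>k. p \<le> k \<Longrightarrow> ratio_spread M (k + p) \<le> \<kappa> * ratio_spread M k"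
proof -
  obtain p where p: "\<forall>i j. mat_pow M p i j > 0"
    using prim by (auto simp: primitive_matrix_def)
  define q where "q = (\<Sum>l\<in>UNIV. \<Sum>c\<in>UNIV. real (mat_pow M p l c))"
  have P: "1 \<le> real (mat_pow M p l c) \<and> real (mat_pow M p l c) \<le> q" for l c
  proof
    show "1 \<le> real (mat_pow M p l c)" using p by (simp add: Suc_le_eq)
    have "real (mat_pow M p l c) \<le> (\<Sum>c\<in>UNIV. real (mat_pow M p l c))"
      by (rule member_le_sum) auto
    also have "\<dots> \<le> q" unfolding q_def by (rule member_le_sum[of l]) (auto intro: sum_nonneg)
    finally show "real (mat_pow M p l c) \<le> q" .
  qed
  then have "q \<ge> 1" using P[of undefined undefined] by linarith
  define g where "g = 1 / (real CARD('a) * q\<^sup>2)"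
  have "g > 0" using \<open>q \<ge> 1\<close> by (simp add: g_def)
  moreover have "ratio_spread M (k + p) \<le> (1 - 2 * g) * ratio_spread M k" if "p \<le> k" for k
  proof -
    define i where "i = k - p"
    have k: "k = i + p" using \<open>p \<le> k\<close> by (simp add: i_def)
    define U where "U = (\<Sum>d\<in>UNIV. colsum M i d)"
    have colsum_k: "U \<le> colsum M k l \<and> colsum M k l \<le> q * U" for l
      unfolding U_def k by (rule colsum_comparable[OF P])
    have weights: "g * colsum M (k + p) c \<le> colsum M k l * real (mat_pow M p l c)" for c l
    proof -
      have "colsum M (k + p) c \<le> (\<Sum>l\<in>(UNIV::'a set). q * U * q)"
        unfolding colsum_add using colsum_k P
        by (intro sum_mono mult_mono) (auto intro: order_trans[OF colsum_nonneg])
      then have "g * colsum M (k + p) c \<le> U"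
        using \<open>q \<ge> 1\<close> by (simp add: g_def field_simps power2_eq_square)
      also have "\<dots> \<le> colsum M k l * 1"
        using colsum_k[of l] by simp
      also have "\<dots> \<le> colsum M k l * real (mat_pow M p l c)"
        using P[of l c] by (intro mult_left_mono) (auto simp: colsum_nonneg)
      finally show ?thesis .
    qed
    define lo where "lo = Min (range (col_ratio M k))"
    define hi where "hi = Max (range (col_ratio M k))"
    have "lo + g * (hi - lo) \<le> col_ratio M (k + p) c \<and> col_ratio M (k + p) c \<le> hi - g * (hi - lo)" for c
      unfolding lo_def hi_def by (rule col_ratio_weighted_bounds[OF prim weights])
    then have "Max (range (col_ratio M (k + p))) \<le> hi - g * (hi - lo)"
      and "lo + g * (hi - lo) \<le> Min (range (col_ratio M (k + p)))"
      by (auto simp: Max_le_iff Min_ge_iff)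
    then show ?thesis by (simp add: ratio_spread_def lo_def hi_def algebra_simps)
  qed
  ultimately show ?thesis using that[of "1 - 2 * g" p] by simp
qed

lemma col_ratio_between:
  fixes M :: "'a::finite \<Rightarrow> 'a \<Rightarrow> nat"
  assumes "primitive_matrix M"
  shows "Min (range (col_ratio M k)) \<le> col_ratio M (k + j) c \<and> col_ratio M (k + j) c \<le> Max (range (col_ratio M k))"
  using col_ratio_weighted_bounds[OF assms, of 0 k j c] by (simp add: colsum_nonneg)

lemma limit_nonpos_of_contraction:
  fixes X :: "nat \<Rightarrow> real"
  assumes "X \<longlonglongrightarrow> a" and "\<kappa> < 1" and "\<And>k. p \<le> k \<Longrightarrow> X (k + p) \<le> \<kappa> * X k"
  shows "a \<le> 0"
proof -
  have "a \<le> \<kappa> * a"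
  proof (rule LIMSEQ_le)
    show "(\<lambda>k. X (k + p)) \<longlonglongrightarrow> a" by (rule LIMSEQ_ignore_initial_segment[OF assms(1)])
    show "(\<lambda>k. \<kappa> * X k) \<longlonglongrightarrow> \<kappa> * a" by (rule tendsto_mult_left[OF assms(1)])
    show "\<exists>N. \<forall>k\<ge>N. X (k + p) \<le> \<kappa> * X k" using assms(3) by blast
  qed
  then show ?thesis using \<open>\<kappa> < 1\<close> by (simp add: mult_le_cancel_right1)
qed

lemma col_ratio_converges:
  fixes M :: "'a::finite \<Rightarrow> 'a \<Rightarrow> nat"
  assumes prim: "primitive_matrix M"
  obtains \<rho> where "\<And>c. (\<lambda>k. col_ratio M k c) \<longlonglongrightarrow> \<rho>"
proof -
  define lo where "lo k = Min (range (col_ratio M k))" for k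
  define hi where "hi k = Max (range (col_ratio M k))" for k
  have between: "lo k \<le> col_ratio M (k + j) c \<and> col_ratio M (k + j) c \<le> hi k" for k j c
    unfolding lo_def hi_def by (rule col_ratio_between[OF prim])
  have "decseq hi"
    by (rule decseq_SucI) (use between[of _ 1] in \<open>simp add: hi_def[of "Suc _"]\<close>)
  moreover have "lo 0 \<le> hi k" for k
    using between[of 0 k undefined] between[of k 0 undefined] by simp
  ultimately obtain H where H: "hi \<longlonglongrightarrow> H"
    using decseq_convergent by blast
  have "incseq lo"
    by (rule incseq_SucI) (use between[of _ 1] in \<open>simp add: lo_def[of "Suc _"]\<close>)
  moreover have "lo k \<le> hi 0" for k
    using between[of 0 k undefined] between[of k 0 undefined] by simp
  ultimately obtain L where L: "lo \<longlonglongrightarrow> L"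
    using incseq_convergent by blast
  have "(\<lambda>k. ratio_spread M k) \<longlonglongrightarrow> H - L"
    unfolding ratio_spread_def lo_def[symmetric] hi_def[symmetric] by (intro tendsto_diff H L)
  moreover obtain p and \<kappa> :: real where "\<kappa> < 1"
    and "\<And>k. p \<le> k \<Longrightarrow> ratio_spread M (k + p) \<le> \<kappa> * ratio_spread M k"
    using ratio_spread_contracts[OF prim] by blast
  ultimately have "H - L \<le> 0"
    by (rule limit_nonpos_of_contraction)
  moreover have "L \<le> H"
  proof (intro LIMSEQ_le[OF L H] exI allI impI)
    show "lo k \<le> hi k" for k
      using between[of k 0 undefined] by simp
  qed
  ultimately have "H = L" by simp
  have "(\<lambda>k. col_ratio M k c) \<longlonglongrightarrow> L" for c
    by (rule tendsto_sandwich[OF _ _ L, of _ hi]) (use between[of _ 0 c] H \<open>H = L\<close> in auto)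
  then show ?thesis by (rule that)
qed

lemma mat_pow_eigenvector:
  fixes v :: "'a::finite \<Rightarrow> 'b::comm_semiring_1"
  assumes eig: "\<And>i. (\<Sum>j\<in>UNIV. of_nat (M i j) * v j) = \<mu> * v i"
  shows "(\<Sum>j\<in>UNIV. of_nat (mat_pow M k i j) * v j) = \<mu> ^ k * v i"
proof (induction k arbitrary: i)
  case 0
  have "(\<Sum>j\<in>UNIV. of_nat (mat_pow M 0 i j) * v j) = (\<Sum>j\<in>UNIV. if i = j then v j else 0)"
    by (rule sum.cong) auto
  then show ?case by simp
next
  case (Suc k)
  have "(\<Sum>j\<in>UNIV. of_nat (mat_pow M (Suc k) i j) * v j)
      = (\<Sum>j\<in>UNIV. \<Sum>l\<in>UNIV. of_nat (M i l) * (of_nat (mat_pow M k l j) * v j))"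
    unfolding mat_pow_Suc_left by (simp add: sum_distrib_right mult.assoc)
  also have "\<dots> = (\<Sum>l\<in>UNIV. \<Sum>j\<in>UNIV. of_nat (M i l) * (of_nat (mat_pow M k l j) * v j))"
    by (rule sum.swap)
  also have "\<dots> = (\<Sum>l\<in>UNIV. of_nat (M i l) * (\<Sum>j\<in>UNIV. of_nat (mat_pow M k l j) * v j))"
    by (simp add: sum_distrib_left)
  also have "\<dots> = \<mu> ^ k * (\<Sum>l\<in>UNIV. of_nat (M i l) * v l)"
    by (simp add: Suc.IH sum_distrib_left mult.left_commute)
  also have "\<dots> = \<mu> ^ Suc k * v i"
    unfolding eig by (simp only: power_Suc mult_ac)
  finally show ?case .
qed

lemma eigenvalue_norm_le_positive_eigenvalue:
  fixes M :: "'a::finite \<Rightarrow> 'a \<Rightarrow> nat" and l :: "'a \<Rightarrow> real"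
  assumes pos: "\<And>i. l i > 0"
    and eig: "\<And>i. (\<Sum>j\<in>UNIV. real (M i j) * l j) = \<rho> * l i"
    and "is_eigenvalue M \<mu>"
  shows "cmod \<mu> \<le> \<rho>"
proof -
  obtain w where "w \<noteq> (\<lambda>_. 0)" and w: "\<And>i. (\<Sum>j\<in>UNIV. of_nat (M i j) * w j) = \<mu> * w i"
    using \<open>is_eigenvalue M \<mu>\<close> by (auto simp: is_eigenvalue_def)
  define t where "t = Max (range (\<lambda>i. cmod (w i) / l i))"
  have "t \<in> range (\<lambda>i. cmod (w i) / l i)"
    unfolding t_def by (auto intro: Max_in)
  then obtain i0 where "t = cmod (w i0) / l i0"
    by blast
  then have i0: "cmod (w i0) = t * l i0"
    using pos[of i0] by simp
  have wt: "cmod (w j) \<le> t * l j" for j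
    using pos[of j] by (simp add: t_def pos_divide_le_eq[symmetric])
  obtain j0 where "w j0 \<noteq> 0" using \<open>w \<noteq> (\<lambda>_. 0)\<close> by auto
  then have "0 < t * l j0"
    using wt[of j0] by (meson less_le_trans zero_less_norm_iff)
  then have "t > 0"
    using pos[of j0] by (simp add: zero_less_mult_iff)
  have "cmod \<mu> * (t * l i0) = cmod (\<Sum>j\<in>UNIV. of_nat (M i0 j) * w j)"
    by (simp add: w i0 norm_mult)
  also have "\<dots> \<le> (\<Sum>j\<in>UNIV. real (M i0 j) * (t * l j))"
    by (rule order_trans[OF norm_sum sum_mono]) (simp add: norm_mult mult_left_mono wt)
  also have "\<dots> = \<rho> * (t * l i0)"
    by (simp add: sum_distrib_left mult.left_commute eig flip: sum_distrib_left)
  finally show ?thesis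
    using \<open>t > 0\<close> pos[of i0] by simp
qed

lemma pf_eigenvalue_eq_positive_eigenvalue:
  fixes M :: "'a::finite \<Rightarrow> 'a \<Rightarrow> nat" and l :: "'a \<Rightarrow> real"
  assumes pos: "\<And>i. l i > 0"
    and eig: "\<And>i. (\<Sum>j\<in>UNIV. real (M i j) * l j) = \<rho> * l i"
  shows "pf_eigenvalue M = \<rho>"
proof -
  have "0 \<le> \<rho> * l undefined"
    unfolding eig[symmetric] by (simp add: sum_nonneg less_imp_le pos)
  then have "\<rho> \<ge> 0"
    using pos[of undefined] by (simp add: zero_le_mult_iff)
  have "is_eigenvalue M (complex_of_real \<rho>)"
    unfolding is_eigenvalue_def
  proof (intro exI[of _ "\<lambda>j. complex_of_real (l j)"] conjI allI)
    show "(\<lambda>j. complex_of_real (l j)) \<noteq> (\<lambda>_. 0)"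
      using pos by (metis less_irrefl of_real_eq_0_iff)
    show "(\<Sum>j\<in>UNIV. of_nat (M i j) * complex_of_real (l j)) = complex_of_real \<rho> * complex_of_real (l i)" for i
      using arg_cong[OF eig[of i], of complex_of_real] by simp
  qed
  then have "\<rho> \<in> {cmod \<mu> | \<mu>. is_eigenvalue M \<mu>}"
    using \<open>\<rho> \<ge> 0\<close> by (auto intro!: exI[of _ "complex_of_real \<rho>"])
  then show ?thesis
    unfolding pf_eigenvalue_def
    by (rule cSup_eq_maximum) (auto intro: eigenvalue_norm_le_positive_eigenvalue[OF pos eig])
qed

lemma primitive_nonneg_eigenvector_pos:
  fixes M :: "'a::finite \<Rightarrow> 'a \<Rightarrow> nat" and l :: "'a \<Rightarrow> real"
  assumes prim: "primitive_matrix M"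
    and nonneg: "\<And>i. 0 \<le> l i" and "l j0 \<noteq> 0"
    and eig: "\<And>i. (\<Sum>j\<in>UNIV. real (M i j) * l j) = \<rho> * l i"
  shows "l i > 0"
proof -
  obtain p where p: "\<forall>i j. mat_pow M p i j > 0"
    using prim by (auto simp: primitive_matrix_def)
  have "0 < real (mat_pow M p i j0) * l j0"
    using p nonneg[of j0] \<open>l j0 \<noteq> 0\<close> by simp
  also have "\<dots> \<le> (\<Sum>j\<in>UNIV. real (mat_pow M p i j) * l j)"
    by (rule member_le_sum) (simp_all add: nonneg)
  also have "\<dots> = \<rho> ^ p * l i"
    by (rule mat_pow_eigenvector) (simp add: eig)
  finally show ?thesis
    using nonneg[of i] by (cases "l i = 0") auto
qed

lemma bounded_fun_seq_convergent_subseq: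
  fixes v :: "nat \<Rightarrow> 'a::finite \<Rightarrow> real"
  assumes "\<And>k i. \<bar>v k i\<bar> \<le> B"
  obtains r l where "strict_mono r" and "\<And>i. (\<lambda>n. v (r n) i) \<longlonglongrightarrow> l i"
proof -
  have "\<forall>d\<subseteq>(UNIV::'a set). \<exists>l r. strict_mono r \<and>
      (\<forall>e>0. eventually (\<lambda>n. \<forall>i\<in>d. dist (v (r n) i) (l i) < e) sequentially)"
    by (rule compact_lemma_general[where f = v and proj = "\<lambda>x i. x i" and unproj = "\<lambda>e. e"])
       (use assms in \<open>auto simp: bounded_real intro!: exI[of _ B]\<close>)
  then obtain l r where r: "strict_mono r"
    and lr: "\<forall>e>0. eventually (\<lambda>n. \<forall>i\<in>UNIV. dist (v (r n) i) (l i) < e) sequentially"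
    by blast
  have "(\<lambda>n. v (r n) i) \<longlonglongrightarrow> l i" for i
  proof (rule tendstoI)
    fix e :: real assume "e > 0"
    with lr have "eventually (\<lambda>n. \<forall>i\<in>UNIV. dist (v (r n) i) (l i) < e) sequentially"
      by blast
    then show "eventually (\<lambda>n. dist (v (r n) i) (l i) < e) sequentially"
      by (rule eventually_mono) blast
  qed
  with r show ?thesis by (rule that)
qed

text \<open>
  \<open>colsum (mat_transpose M) k i\<close> is the \<open>i\<close>-th row sum of \<open>M\<^sup>k\<close>; normalised, these vectors
  have a convergent subsequence, whose limit is a right eigenvector.
\<close>
lemma transpose_col_ratio_limit_eigenvector:
  fixes M :: "'a::finite \<Rightarrow> 'a \<Rightarrow> nat"
  assumes prim: "primitive_matrix M"
    and lim: "\<And>i. (\<lambda>k. col_ratio (mat_transpose M) k i) \<longlonglongrightarrow> \<rho>"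
  obtains l :: "'a \<Rightarrow> real"
  where "\<And>i. 0 \<le> l i" and "sum l UNIV = 1" and "\<And>i. (\<Sum>j\<in>UNIV. real (M i j) * l j) = \<rho> * l i"
proof -
  let ?r = "colsum (mat_transpose M)"
  have rpos: "?r k i > 0" for k i
    by (rule colsum_pos[OF primitive_matrix_transpose[OF prim]])
  define v where "v k i = ?r k i / sum (?r k) UNIV" for k i
  have v01: "0 \<le> v k i \<and> v k i \<le> 1" for k i
  proof -
    have "?r k i \<le> sum (?r k) UNIV" by (rule member_le_sum) (simp_all add: colsum_nonneg)
    then show ?thesis using rpos[of k i] by (simp add: v_def)
  qed
  have vsum: "sum (v k) UNIV = 1" for k
  proof -
    have "sum (?r k) UNIV > 0"
      by (rule sum_pos) (simp_all add: rpos)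
    then show ?thesis by (simp add: v_def sum_divide_distrib[symmetric])
  qed
  have v_step: "(\<Sum>j\<in>UNIV. real (M i j) * v k j) = col_ratio (mat_transpose M) k i * v k i" for k i
  proof -
    have "(\<Sum>j\<in>UNIV. real (M i j) * v k j) = ?r (Suc k) i / sum (?r k) UNIV"
      by (simp add: v_def colsum_Suc mat_transpose_def sum_divide_distrib mult.commute)
    then show ?thesis
      using rpos[of k i] by (simp add: v_def col_ratio_def)
  qed
  obtain r l where r: "strict_mono r" and vconv: "\<And>i. (\<lambda>n. v (r n) i) \<longlonglongrightarrow> l i"
    using bounded_fun_seq_convergent_subseq[of v 1] v01 by (metis abs_of_nonneg)
  have "(\<lambda>n. (\<Sum>j\<in>UNIV. real (M i j) * v (r n) j)) \<longlonglongrightarrow> (\<Sum>j\<in>UNIV. real (M i j) * l j)" for i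
    by (intro tendsto_intros vconv)
  moreover have "(\<lambda>n. col_ratio (mat_transpose M) (r n) i * v (r n) i) \<longlonglongrightarrow> \<rho> * l i" for i
    using LIMSEQ_subseq_LIMSEQ[OF lim r] by (intro tendsto_intros vconv) (simp add: comp_def)
  ultimately have "(\<Sum>j\<in>UNIV. real (M i j) * l j) = \<rho> * l i" for i
    unfolding v_step by (rule LIMSEQ_unique)
  moreover have "0 \<le> l i" for i
    using v01 by (intro LIMSEQ_le_const[OF vconv]) auto
  moreover have "(\<lambda>n. sum (v (r n)) UNIV) \<longlonglongrightarrow> sum l UNIV"
    by (intro tendsto_intros vconv)
  then have "sum l UNIV = 1"
    using vsum by (simp add: LIMSEQ_const_iff)
  ultimately show ?thesis using that by blast
qed

lemma sum_ratio_deviation_le: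
  fixes x y :: "'a::finite \<Rightarrow> real"
  assumes y: "\<And>c. y c > 0"
  shows "\<bar>sum x UNIV / sum y UNIV - \<rho>\<bar> \<le> (\<Sum>c\<in>UNIV. \<bar>x c / y c - \<rho>\<bar>)"
proof -
  define S where "S = sum y UNIV"
  have "S > 0" unfolding S_def by (rule sum_pos) (simp_all add: y)
  have summand: "(x c / y c - \<rho>) * (y c / S) = (x c - \<rho> * y c) / S" for c
    using y[of c] by (simp add: left_diff_distrib diff_divide_distrib)
  have "(\<Sum>c\<in>UNIV. (x c / y c - \<rho>) * (y c / S)) = (\<Sum>c\<in>UNIV. x c - \<rho> * y c) / S"
    by (simp only: summand sum_divide_distrib)
  also have "\<dots> = sum x UNIV / S - \<rho>"
    using \<open>S > 0\<close> by (simp add: sum_subtractf sum_distrib_left[symmetric] diff_divide_distrib S_def)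
  finally have "sum x UNIV / S - \<rho> = (\<Sum>c\<in>UNIV. (x c / y c - \<rho>) * (y c / S))" ..
  also have "\<bar>\<dots>\<bar> \<le> (\<Sum>c\<in>UNIV. \<bar>x c / y c - \<rho>\<bar>)"
  proof (rule order_trans[OF sum_abs sum_mono])
    fix c
    have "y c \<le> S"
      unfolding S_def by (rule member_le_sum) (simp_all add: y less_imp_le)
    then have "y c / S \<le> 1" "0 \<le> y c / S" using y[of c] \<open>S > 0\<close> by simp_all
    then have "\<bar>(x c / y c - \<rho>) * (y c / S)\<bar> = \<bar>x c / y c - \<rho>\<bar> * (y c / S)"
      by (simp only: abs_mult abs_of_nonneg)
    also have "\<dots> \<le> \<bar>x c / y c - \<rho>\<bar>"
      using \<open>y c / S \<le> 1\<close> by (rule mult_left_le) simp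
    finally show "\<bar>(x c / y c - \<rho>) * (y c / S)\<bar> \<le> \<bar>x c / y c - \<rho>\<bar>" .
  qed
  finally show ?thesis by (simp add: S_def)
qed

lemma sum_ratio_tendsto:
  fixes x y :: "nat \<Rightarrow> 'a::finite \<Rightarrow> real"
  assumes y: "\<And>k c. y k c > 0" and lim: "\<And>c. (\<lambda>k. x k c / y k c) \<longlonglongrightarrow> \<rho>"
  shows "(\<lambda>k. sum (x k) UNIV / sum (y k) UNIV) \<longlonglongrightarrow> \<rho>"
proof -
  have "(\<lambda>k. \<Sum>c\<in>UNIV. \<bar>x k c / y k c - \<rho>\<bar>) \<longlonglongrightarrow> 0"
  proof (rule tendsto_null_sum)
    show "(\<lambda>k. \<bar>x k c / y k c - \<rho>\<bar>) \<longlonglongrightarrow> 0" for c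
      using lim[of c] by (simp add: tendsto_rabs_zero_iff flip: Lim_null)
  qed
  then have "(\<lambda>k. sum (x k) UNIV / sum (y k) UNIV - \<rho>) \<longlonglongrightarrow> 0"
    by (rule Lim_null_comparison[rotated]) (simp add: sum_ratio_deviation_le y)
  then show ?thesis by (simp add: Lim_null[symmetric])
qed

theorem col_ratio_tendsto_pf_eigenvalue:
  fixes M :: "'a::finite \<Rightarrow> 'a \<Rightarrow> nat"
  assumes prim: "primitive_matrix M"
  shows "(\<lambda>k. col_ratio M k c) \<longlonglongrightarrow> pf_eigenvalue M"
proof -
  obtain \<rho> where \<rho>: "\<And>c. (\<lambda>k. col_ratio M k c) \<longlonglongrightarrow> \<rho>"
    using col_ratio_converges[OF prim] by blast
  obtain \<rho>' where \<rho>': "\<And>c. (\<lambda>k. col_ratio (mat_transpose M) k c) \<longlonglongrightarrow> \<rho>'"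
    using col_ratio_converges[OF primitive_matrix_transpose[OF prim]] by blast
  obtain l where nonneg: "\<And>i. 0 \<le> l i" and "sum l UNIV = 1"
    and eig: "\<And>i. (\<Sum>j\<in>UNIV. real (M i j) * l j) = \<rho>' * l i"
    using transpose_col_ratio_limit_eigenvector[OF prim \<rho>'] by blast
  have "\<exists>j0. l j0 \<noteq> 0"
  proof (rule ccontr)
    assume "\<nexists>j0. l j0 \<noteq> 0"
    then show False using \<open>sum l UNIV = 1\<close> by simp
  qed
  then obtain j0 where "l j0 \<noteq> 0" by blast
  then have "l i > 0" for i
    by (rule primitive_nonneg_eigenvector_pos[OF prim nonneg _ eig])
  then have "pf_eigenvalue M = \<rho>'"
    using eig by (rule pf_eigenvalue_eq_positive_eigenvalue)
  \<comment> \<open>both limits are the limit of the ratio of the total sums of \<open>M\<^sup>k\<^sup>+\<^sup>1\<close> and \<open>M\<^sup>k\<close>\<close>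
  moreover have "\<rho> = \<rho>'"
  proof (rule LIMSEQ_unique)
    show "(\<lambda>k. sum (colsum M (Suc k)) UNIV / sum (colsum M k) UNIV) \<longlonglongrightarrow> \<rho>"
      by (rule sum_ratio_tendsto[OF colsum_pos[OF prim]]) (use \<rho> in \<open>simp add: col_ratio_def\<close>)
    show "(\<lambda>k. sum (colsum M (Suc k)) UNIV / sum (colsum M k) UNIV) \<longlonglongrightarrow> \<rho>'"
      unfolding sum_colsum_transpose[of M, symmetric]
      by (rule sum_ratio_tendsto[OF colsum_pos[OF primitive_matrix_transpose[OF prim]]])
         (use \<rho>' in \<open>simp add: col_ratio_def\<close>)
  qed
  ultimately show ?thesis using \<rho> by simp
qed

corollary pf_eigenvalue_nonneg:
  fixes M :: "'a::finite \<Rightarrow> 'a \<Rightarrow> nat"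
  assumes "primitive_matrix M"
  shows "0 \<le> pf_eigenvalue M"
  using col_ratio_tendsto_pf_eigenvalue[OF assms, of undefined]
  by (rule LIMSEQ_le_const) (auto simp: col_ratio_def colsum_nonneg)

section \<open>Lengths of substituted words\<close>

lemma length_eq_sum_count_list: "length (xs :: 'a::finite list) = (\<Sum>b\<in>UNIV. count_list xs b)"
  by (simp add: sum_count_set)

definition subst_iter :: "('a \<Rightarrow> 'a list set) \<Rightarrow> nat \<Rightarrow> 'a list \<Rightarrow> 'a list set" where
  "subst_iter \<theta> k u = (subst_set \<theta> ^^ k) {u}"

lemma funpow_subst_set: "(subst_set \<theta> ^^ k) S = (\<Union>u\<in>S. subst_iter \<theta> k u)"
proof (induction k arbitrary: S)
  case 0
  then show ?case by (simp add: subst_iter_def)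
next
  case (Suc k)
  have "(subst_set \<theta> ^^ Suc k) S = subst_set \<theta> (\<Union>u\<in>S. subst_iter \<theta> k u)"
    by (simp add: Suc.IH)
  also have "\<dots> = (\<Union>u\<in>S. subst_set \<theta> (subst_iter \<theta> k u))"
    by (auto simp: subst_set_def)
  finally show ?case by (simp add: subst_iter_def)
qed

lemma subst_iter_Suc: "subst_iter \<theta> (Suc k) u = subst_set \<theta> (subst_iter \<theta> k u)"
  by (simp add: subst_iter_def)

lemma subst_iter_add: "subst_iter \<theta> (k + m) u = (\<Union>v\<in>subst_iter \<theta> m u. subst_iter \<theta> k v)"
  unfolding subst_iter_def[of \<theta> "k + m"] funpow_add comp_apply subst_iter_def[of \<theta> m, symmetric]
  by (rule funpow_subst_set)

lemma subst_iter_Suc_right: "subst_iter \<theta> (Suc k) u = (\<Union>v\<in>subst_word \<theta> u. subst_iter \<theta> k v)"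
  using subst_iter_add[of \<theta> k 1 u] by (simp add: subst_iter_def subst_set_def)

lemma subst_word_nonempty:
  assumes "random_substitution \<theta>"
  shows "subst_word \<theta> u \<noteq> {}"
proof (induction u)
  case (Cons a u)
  obtain w where "w \<in> \<theta> a" using assms by (auto simp: random_substitution_def)
  moreover obtain v where "v \<in> subst_word \<theta> u" using Cons.IH by auto
  ultimately show ?case by auto
qed simp

lemma ell1_pos:
  assumes "random_substitution \<theta>"
  shows "ell1 \<theta> a > 0"
proof -
  have "\<theta> a \<noteq> {}" "[] \<notin> \<theta> a" using assms by (auto simp: random_substitution_def)
  then have "(SOME u. u \<in> \<theta> a) \<noteq> []" by (metis some_in_eq)
  then show ?thesis by (simp add: ell1_def)
qed

definition image_length :: "('a::finite \<Rightarrow> 'a list set) \<Rightarrow> 'a list \<Rightarrow> nat" where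
  "image_length \<theta> u = (\<Sum>a\<in>UNIV. count_list u a * ell1 \<theta> a)"

lemma image_length_append: "image_length \<theta> (u @ v) = image_length \<theta> u + image_length \<theta> v"
  by (simp add: image_length_def distrib_right sum.distrib)

lemma image_length_Cons: "image_length \<theta> (a # u) = ell1 \<theta> a + image_length \<theta> u"
proof -
  have "image_length \<theta> [a] = (\<Sum>b\<in>UNIV. if b = a then ell1 \<theta> b else 0)"
    unfolding image_length_def by (intro sum.cong) auto
  then show ?thesis
    using image_length_append[of \<theta> "[a]" u] by simp
qed

lemma image_length_le: "image_length \<theta> u \<le> Max (range (ell1 \<theta>)) * length u"
proof -
  have "image_length \<theta> u \<le> (\<Sum>a\<in>UNIV. count_list u a * Max (range (ell1 \<theta>)))"
    unfolding image_length_def by (intro sum_mono mult_left_mono) auto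
  then show ?thesis
    by (simp add: length_eq_sum_count_list sum_distrib_right mult.commute)
qed

context
  fixes \<theta> :: "'a::finite \<Rightarrow> 'a list set"
  assumes rs: "random_substitution \<theta>" and sc: "semi_compatible \<theta>"
begin

lemma count_list_subst_letter:
  assumes "w \<in> \<theta> a"
  shows "count_list w b = subst_matrix \<theta> b a"
proof -
  have "(SOME u. u \<in> \<theta> a) \<in> \<theta> a" using assms by (rule someI)
  then show ?thesis using sc assms unfolding semi_compatible_def subst_matrix_def by metis
qed

lemma length_subst_letter:
  assumes "w \<in> \<theta> a"
  shows "length w = ell1 \<theta> a"
proof -
  have "(SOME u. u \<in> \<theta> a) \<in> \<theta> a" using assms by (rule someI)
  then show ?thesis
    using count_list_subst_letter[OF assms] count_list_subst_letter
    by (simp add: ell1_def length_eq_sum_count_list)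
qed

lemma count_list_subst_word:
  "w \<in> subst_word \<theta> u \<Longrightarrow> count_list w b = (\<Sum>a\<in>UNIV. count_list u a * subst_matrix \<theta> b a)"
proof (induction u arbitrary: w)
  case (Cons a u)
  then obtain x y where "w = x @ y" "x \<in> \<theta> a" "y \<in> subst_word \<theta> u" by auto
  then have "count_list w b = subst_matrix \<theta> b a + (\<Sum>e\<in>UNIV. count_list u e * subst_matrix \<theta> b e)"
    using count_list_subst_letter Cons.IH by simp
  also have "\<dots> = (\<Sum>e\<in>UNIV. count_list u e * subst_matrix \<theta> b e + (if e = a then subst_matrix \<theta> b e else 0))"
    by (simp add: sum.distrib)
  also have "\<dots> = (\<Sum>e\<in>UNIV. count_list (a # u) e * subst_matrix \<theta> b e)"
    by (intro sum.cong) auto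
  finally show ?case .
qed simp

lemma count_list_subst_iter:
  "w \<in> subst_iter \<theta> k u \<Longrightarrow> count_list w b = (\<Sum>a\<in>UNIV. count_list u a * mat_pow (subst_matrix \<theta>) k b a)"
proof (induction k arbitrary: u w)
  case 0
  then show ?case by (simp add: subst_iter_def if_distrib cong: if_cong)
next
  case (Suc k)
  let ?M = "subst_matrix \<theta>"
  from Suc.prems obtain v where v: "v \<in> subst_word \<theta> u" and w: "w \<in> subst_iter \<theta> k v"
    by (auto simp: subst_iter_Suc_right)
  have "count_list w b = (\<Sum>d\<in>UNIV. (\<Sum>a\<in>UNIV. count_list u a * ?M d a) * mat_pow ?M k b d)"
    using Suc.IH[OF w] count_list_subst_word[OF v] by simp
  also have "\<dots> = (\<Sum>d\<in>UNIV. \<Sum>a\<in>UNIV. count_list u a * (mat_pow ?M k b d * ?M d a))"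
    by (simp add: sum_distrib_left ac_simps)
  also have "\<dots> = (\<Sum>a\<in>UNIV. \<Sum>d\<in>UNIV. count_list u a * (mat_pow ?M k b d * ?M d a))"
    by (rule sum.swap)
  also have "\<dots> = (\<Sum>a\<in>UNIV. count_list u a * mat_pow ?M (Suc k) b a)"
    by (simp add: sum_distrib_left)
  finally show ?case .
qed

lemma count_list_subst_iter_letter:
  "w \<in> subst_iter \<theta> k [c] \<Longrightarrow> count_list w b = mat_pow (subst_matrix \<theta>) k b c"
proof -
  assume "w \<in> subst_iter \<theta> k [c]"
  then have "count_list w b = (\<Sum>a\<in>UNIV. count_list [c] a * mat_pow (subst_matrix \<theta>) k b a)"
    by (rule count_list_subst_iter)
  also have "\<dots> = (\<Sum>a\<in>UNIV. if a = c then mat_pow (subst_matrix \<theta>) k b a else 0)"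
    by (intro sum.cong) auto
  finally show ?thesis by simp
qed

lemma length_subst_iter_letter:
  "w \<in> subst_iter \<theta> k [c] \<Longrightarrow> length w = (\<Sum>b\<in>UNIV. mat_pow (subst_matrix \<theta>) k b c)"
  by (simp add: length_eq_sum_count_list count_list_subst_iter_letter)

lemma real_length_subst_iter_letter:
  "w \<in> subst_iter \<theta> k [c] \<Longrightarrow> real (length w) = colsum (subst_matrix \<theta>) k c"
  by (simp add: length_subst_iter_letter colsum_def)

lemma length_subst_word:
  "w \<in> subst_word \<theta> u \<Longrightarrow> length w = image_length \<theta> u"
proof (induction u arbitrary: w)
  case (Cons a u)
  then obtain x y where "w = x @ y" "x \<in> \<theta> a" "y \<in> subst_word \<theta> u" by auto
  then show ?case
    using Cons.IH length_subst_letter by (simp add: image_length_Cons)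
qed (simp add: image_length_def)

lemma long_legal_word_in_subst_iter:
  obtains B where "\<And>u. u \<in> language \<theta> \<Longrightarrow> B \<le> length u \<Longrightarrow> \<exists>v w. w \<in> subst_iter \<theta> k v \<and> sublist u w"
proof -
  let ?M = "subst_matrix \<theta>"
  define B where "B = Suc (\<Sum>m<k. \<Sum>a\<in>UNIV. \<Sum>b\<in>UNIV. mat_pow ?M m b a)"
  have "\<exists>v w. w \<in> subst_iter \<theta> k v \<and> sublist u w" if "u \<in> language \<theta>" "B \<le> length u" for u
  proof -
    obtain a m w where w: "w \<in> subst_iter \<theta> m [a]" and "sublist u w"
      using \<open>u \<in> language \<theta>\<close> by (auto simp: language_def subst_pow_def subst_iter_def)
    have "k \<le> m"
    proof (rule ccontr)
      assume "\<not> k \<le> m"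
      have "length w = (\<Sum>b\<in>UNIV. mat_pow ?M m b a)"
        by (rule length_subst_iter_letter[OF w])
      also have "\<dots> \<le> (\<Sum>a\<in>UNIV. \<Sum>b\<in>UNIV. mat_pow ?M m b a)"
        by (rule member_le_sum) auto
      also have "\<dots> < B"
        unfolding B_def using \<open>\<not> k \<le> m\<close> by (intro le_imp_less_Suc member_le_sum) auto
      finally show False
        using \<open>B \<le> length u\<close> sublist_length_le[OF \<open>sublist u w\<close>] by simp
    qed
    then have "w \<in> subst_iter \<theta> (k + (m - k)) [a]" using w by simp
    then show ?thesis using \<open>sublist u w\<close> by (auto simp: subst_iter_add)
  qed
  then show ?thesis by (rule that)
qed

lemma image_length_subst_iter_letter:
  assumes "w \<in> subst_iter \<theta> k [c]"
  shows "real (image_length \<theta> w) = colsum (subst_matrix \<theta>) (Suc k) c"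
proof -
  obtain v where v: "v \<in> subst_word \<theta> w" using subst_word_nonempty[OF rs] by blast
  then have "v \<in> subst_iter \<theta> (Suc k) [c]"
    using assms by (auto simp: subst_iter_Suc subst_set_def)
  then have "real (length v) = colsum (subst_matrix \<theta>) (Suc k) c"
    by (rule real_length_subst_iter_letter)
  then show ?thesis
    using length_subst_word[OF v] by simp
qed

end

section \<open>Long legal words\<close>

lemma subst_word_append:
  "w \<in> subst_word \<theta> (u @ v) \<Longrightarrow> \<exists>x y. w = x @ y \<and> x \<in> subst_word \<theta> u \<and> y \<in> subst_word \<theta> v"
proof (induction u arbitrary: w)
  case (Cons a u)
  then obtain x y where "w = x @ y" "x \<in> \<theta> a" "y \<in> subst_word \<theta> (u @ v)" by auto
  with Cons.IH obtain y1 y2 where "y = y1 @ y2" "y1 \<in> subst_word \<theta> u" "y2 \<in> subst_word \<theta> v" by blast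
  then show ?case using \<open>w = x @ y\<close> \<open>x \<in> \<theta> a\<close> by (intro exI[of _ "x @ y1"] exI[of _ y2]) auto
qed force

lemma subst_word_concat:
  "w \<in> subst_word \<theta> (concat us) \<Longrightarrow> \<exists>ws. w = concat ws \<and> (\<forall>x\<in>set ws. \<exists>u\<in>set us. x \<in> subst_word \<theta> u)"
proof (induction us arbitrary: w)
  case (Cons u us)
  then obtain x y where "w = x @ y" "x \<in> subst_word \<theta> u" "y \<in> subst_word \<theta> (concat us)"
    using subst_word_append[of w \<theta> u "concat us"] by auto
  with Cons.IH obtain ws where "y = concat ws" "\<forall>x\<in>set ws. \<exists>u\<in>set us. x \<in> subst_word \<theta> u"
    by blast
  then show ?case using \<open>w = x @ y\<close> \<open>x \<in> subst_word \<theta> u\<close> by (intro exI[of _ "x # ws"]) auto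
qed simp

lemma subst_iter_blocks:
  "w \<in> subst_iter \<theta> k u \<Longrightarrow> \<exists>ws. w = concat ws \<and> (\<forall>x\<in>set ws. \<exists>c. x \<in> subst_iter \<theta> k [c])"
proof (induction k arbitrary: w)
  case 0
  then have "w = u" by (simp add: subst_iter_def)
  then show ?case by (intro exI[of _ "map (\<lambda>c. [c]) u"]) (auto simp: subst_iter_def)
next
  case (Suc k)
  then obtain v where w: "w \<in> subst_word \<theta> v" and v: "v \<in> subst_iter \<theta> k u"
    by (auto simp: subst_iter_Suc subst_set_def)
  from Suc.IH[OF v] obtain vs where vs: "v = concat vs" "\<forall>x\<in>set vs. \<exists>c. x \<in> subst_iter \<theta> k [c]"
    by blast
  from w have "w \<in> subst_word \<theta> (concat vs)" by (simp add: vs(1))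
  from subst_word_concat[OF this] obtain ws where
    ws: "w = concat ws" "\<forall>x\<in>set ws. \<exists>y\<in>set vs. x \<in> subst_word \<theta> y" by blast
  have blocks: "\<exists>c. x \<in> subst_iter \<theta> (Suc k) [c]" if x: "x \<in> set ws" for x
  proof -
    obtain y where "y \<in> set vs" "x \<in> subst_word \<theta> y"
      using ws(2) x by blast
    moreover obtain c where "y \<in> subst_iter \<theta> k [c]" using vs(2) \<open>y \<in> set vs\<close> by blast
    ultimately have "x \<in> subst_iter \<theta> (Suc k) [c]" by (auto simp: subst_iter_Suc subst_set_def)
    then show ?thesis ..
  qed
  show ?case
    by (intro exI[of _ ws] conjI ws(1) ballI blocks)
qed

lemma prefix_concat_bounded:
  assumes "\<forall>x\<in>set ws. length x \<le> D" and "prefix y (concat ws)"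
  shows "\<exists>ws' s. y = concat ws' @ s \<and> set ws' \<subseteq> set ws \<and> length s \<le> D"
  using assms
proof (induction ws arbitrary: y)
  case (Cons x ws)
  from Cons.prems(2) consider "prefix y x" | z where "y = x @ z" "prefix z (concat ws)"
    by (auto simp: prefix_append)
  then show ?case
  proof cases
    case 1
    then have "length y \<le> D" using Cons.prems(1) prefix_length_le by fastforce
    then show ?thesis by (intro exI[of _ "[]"] exI[of _ y]) auto
  next
    case 2
    have "\<forall>x\<in>set ws. length x \<le> D" using Cons.prems(1) by simp
    with Cons.IH 2(2) obtain ws' s where "z = concat ws' @ s" "set ws' \<subseteq> set ws" "length s \<le> D"
      by blast
    then show ?thesis using 2 by (intro exI[of _ "x # ws'"] exI[of _ s]) auto
  qed
qed simp

lemma sublist_concat_bounded: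
  assumes "\<forall>x\<in>set ws. length x \<le> D" and "sublist u (concat ws)"
  shows "\<exists>p ws' s. u = p @ concat ws' @ s \<and> length p \<le> D \<and> length s \<le> D \<and> set ws' \<subseteq> set ws"
  using assms
proof (induction ws arbitrary: u)
  case (Cons x ws)
  from Cons.prems(2) consider "sublist u x" | "sublist u (concat ws)"
    | y z where "u = y @ z" "suffix y x" "prefix z (concat ws)"
    by (auto simp: sublist_append)
  then show ?case
  proof cases
    case 1
    then have "length u \<le> D" using Cons.prems(1) sublist_length_le by fastforce
    then show ?thesis by (intro exI[of _ u] exI[of _ "[]"] exI[of _ "[]"]) auto
  next
    case 2
    with Cons.IH Cons.prems(1) show ?thesis by fastforce
  next
    case 3
    with Cons.prems(1) obtain ws' s where "z = concat ws' @ s" "set ws' \<subseteq> set ws" "length s \<le> D"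
      using prefix_concat_bounded[of ws D z] by auto
    moreover have "length y \<le> D" using 3 Cons.prems(1) suffix_length_le by fastforce
    ultimately show ?thesis using 3(1) by (intro exI[of _ y] exI[of _ ws'] exI[of _ s]) auto
  qed
qed simp

lemma image_length_deviation_concat:
  assumes "\<And>x. x \<in> set ws \<Longrightarrow> \<bar>real (image_length \<theta> x) - \<rho> * real (length x)\<bar> \<le> d * real (length x)"
  shows "\<bar>real (image_length \<theta> (concat ws)) - \<rho> * real (length (concat ws))\<bar> \<le> d * real (length (concat ws))"
  using assms
proof (induction ws)
  case (Cons x ws)
  then have "\<bar>real (image_length \<theta> x) - \<rho> * real (length x)\<bar> \<le> d * real (length x)"
    and "\<bar>real (image_length \<theta> (concat ws)) - \<rho> * real (length (concat ws))\<bar> \<le> d * real (length (concat ws))"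
    by simp_all
  then show ?case by (simp add: image_length_append distrib_left)
qed (simp add: image_length_def)

lemma image_length_deviation_le:
  assumes "0 \<le> \<rho>"
  shows "\<bar>real (image_length \<theta> u) - \<rho> * real (length u)\<bar> \<le> (real (Max (range (ell1 \<theta>))) + \<rho>) * real (length u)"
proof -
  have "real (image_length \<theta> u) \<le> real (Max (range (ell1 \<theta>))) * real (length u)"
    using image_length_le[of \<theta> u] by (metis of_nat_le_iff of_nat_mult)
  moreover have "0 \<le> \<rho> * real (length u)" using assms by simp
  ultimately show ?thesis by (simp add: abs_le_iff algebra_simps)
qed

lemma ceiling_floor_window:
  fixes N m :: nat and r e :: real
  assumes "0 < e" "e < r" and close: "\<bar>real N - r * real m\<bar> \<le> e * real m"
  shows "\<lceil>real N / (r + e)\<rceil> \<le> int m \<and> int m \<le> \<lfloor>real N / (r - e)\<rfloor>"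
proof
  have "real N \<le> (r + e) * real m" using close by (simp add: abs_le_iff algebra_simps)
  then have "real N / (r + e) \<le> real m" using assms by (simp add: divide_le_eq mult.commute)
  then show "\<lceil>real N / (r + e)\<rceil> \<le> int m" by (simp add: ceiling_le_iff)
  have "(r - e) * real m \<le> real N" using close by (simp add: abs_le_iff algebra_simps)
  then have "real m \<le> real N / (r - e)" using assms by (simp add: le_divide_eq mult.commute)
  then show "int m \<le> \<lfloor>real N / (r - e)\<rfloor>" by (simp add: le_floor_iff)
qed

context
  fixes \<theta> :: "'a::finite \<Rightarrow> 'a list set"
  assumes rs: "random_substitution \<theta>" and sc: "semi_compatible \<theta>"
    and prim: "primitive_subst \<theta>"
begin

lemma subst_iter_letter_image_length_close:
  assumes "d > 0"
  obtains k where "\<And>c w. w \<in> subst_iter \<theta> k [c] \<Longrightarrow>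
    \<bar>real (image_length \<theta> w) - pf_eigenvalue (subst_matrix \<theta>) * real (length w)\<bar> \<le> d * real (length w)"
proof -
  let ?M = "subst_matrix \<theta>" and ?\<rho> = "pf_eigenvalue (subst_matrix \<theta>)"
  have primM: "primitive_matrix ?M" using prim by (simp add: primitive_subst_def)
  have "\<forall>\<^sub>F k in sequentially. \<forall>c. dist (col_ratio ?M k c) ?\<rho> < d"
    using col_ratio_tendsto_pf_eigenvalue[OF primM] \<open>d > 0\<close>
    by (intro eventually_all_finite) (simp add: tendsto_iff)
  then obtain k where k: "\<And>c. \<bar>col_ratio ?M k c - ?\<rho>\<bar> < d"
    by (auto simp: eventually_sequentially dist_real_def)
  have "\<bar>real (image_length \<theta> w) - ?\<rho> * real (length w)\<bar> \<le> d * real (length w)"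
    if w: "w \<in> subst_iter \<theta> k [c]" for c w
  proof -
    have pos: "colsum ?M k c > 0" by (rule colsum_pos[OF primM])
    have "\<bar>colsum ?M (Suc k) c - ?\<rho> * colsum ?M k c\<bar> = \<bar>col_ratio ?M k c - ?\<rho>\<bar> * colsum ?M k c"
      using pos by (simp add: col_ratio_def field_simps abs_mult)
    also have "\<dots> \<le> d * colsum ?M k c"
      using k[of c] pos by (intro mult_right_mono) auto
    finally show ?thesis
      using real_length_subst_iter_letter[OF rs sc w] image_length_subst_iter_letter[OF rs sc w] by simp
  qed
  then show ?thesis by (rule that)
qed

lemma long_legal_word_decomposition:
  obtains B D where "\<And>u. u \<in> language \<theta> \<Longrightarrow> B \<le> length u \<Longrightarrow>
    \<exists>p ws s. u = p @ concat ws @ s \<and> length p \<le> D \<and> length s \<le> D \<and>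
      (\<forall>x\<in>set ws. \<exists>c. x \<in> subst_iter \<theta> k [c])"
proof -
  obtain B where long: "\<And>u. u \<in> language \<theta> \<Longrightarrow> B \<le> length u \<Longrightarrow> \<exists>v w. w \<in> subst_iter \<theta> k v \<and> sublist u w"
    using long_legal_word_in_subst_iter[OF rs sc] by blast
  define D where "D = (\<Sum>c\<in>UNIV. \<Sum>b\<in>UNIV. mat_pow (subst_matrix \<theta>) k b c)"
  have block_length: "length w \<le> D" if "w \<in> subst_iter \<theta> k [c]" for w c
    unfolding length_subst_iter_letter[OF rs sc that] D_def by (rule member_le_sum) auto
  have "\<exists>p ws s. u = p @ concat ws @ s \<and> length p \<le> D \<and> length s \<le> D \<and>
      (\<forall>x\<in>set ws. \<exists>c. x \<in> subst_iter \<theta> k [c])"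
    if "u \<in> language \<theta>" and "B \<le> length u" for u
  proof -
    obtain v w where "w \<in> subst_iter \<theta> k v" "sublist u w"
      using long[OF \<open>u \<in> language \<theta>\<close> \<open>B \<le> length u\<close>] by blast
    then obtain ws where ws: "w = concat ws" "\<forall>x\<in>set ws. \<exists>c. x \<in> subst_iter \<theta> k [c]"
      using subst_iter_blocks by blast
    then obtain p ws' s where "u = p @ concat ws' @ s" "length p \<le> D" "length s \<le> D" "set ws' \<subseteq> set ws"
      using sublist_concat_bounded[of ws D u] block_length \<open>sublist u w\<close> by blast
    with ws(2) show ?thesis by blast
  qed
  then show ?thesis by (rule that)
qed

lemma legal_image_length_close:
  assumes "\<delta> > 0"
  obtains L where "\<And>u. u \<in> language \<theta> \<Longrightarrow> L \<le> length u \<Longrightarrow>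
    \<bar>real (image_length \<theta> u) - pf_eigenvalue (subst_matrix \<theta>) * real (length u)\<bar> \<le> \<delta> * real (length u)"
proof -
  let ?\<rho> = "pf_eigenvalue (subst_matrix \<theta>)"
  let ?dev = "\<lambda>x. \<bar>real (image_length \<theta> x) - ?\<rho> * real (length x)\<bar>"
  \<comment> \<open>half of \<open>\<delta>\<close> for the blocks, half for the two boundary pieces\<close>
  define d where "d = \<delta> / 2"
  have "d > 0" using assms by (simp add: d_def)
  obtain k where block_close: "\<And>c w. w \<in> subst_iter \<theta> k [c] \<Longrightarrow> ?dev w \<le> d * real (length w)"
    using subst_iter_letter_image_length_close[OF \<open>d > 0\<close>] by blast
  obtain B D where decomp: "\<And>u. u \<in> language \<theta> \<Longrightarrow> B \<le> length u \<Longrightarrow>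
      \<exists>p ws s. u = p @ concat ws @ s \<and> length p \<le> D \<and> length s \<le> D \<and>
        (\<forall>x\<in>set ws. \<exists>c. x \<in> subst_iter \<theta> k [c])"
    using long_legal_word_decomposition by blast
  define C where "C = real (Max (range (ell1 \<theta>))) + ?\<rho>"
  have "0 \<le> ?\<rho>"
    using prim by (simp add: primitive_subst_def pf_eigenvalue_nonneg)
  have short: "?dev x \<le> C * real D" if "length x \<le> D" for x
  proof -
    have "?dev x \<le> C * real (length x)"
      unfolding C_def by (rule image_length_deviation_le[OF \<open>0 \<le> ?\<rho>\<close>])
    also have "\<dots> \<le> C * real D"
      using that \<open>0 \<le> ?\<rho>\<close> by (intro mult_left_mono) (auto simp: C_def)
    finally show ?thesis .
  qed
  define L where "L = max B (nat \<lceil>2 * C * real D / d\<rceil>)"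
  have "?dev u \<le> \<delta> * real (length u)" if "u \<in> language \<theta>" and "L \<le> length u" for u
  proof -
    obtain p ws s where u: "u = p @ concat ws @ s" and "length p \<le> D" "length s \<le> D"
      and blocks: "\<forall>x\<in>set ws. \<exists>c. x \<in> subst_iter \<theta> k [c]"
      using decomp[OF \<open>u \<in> language \<theta>\<close>] \<open>L \<le> length u\<close> by (auto simp: L_def)
    have "?dev (concat ws) \<le> d * real (length (concat ws))"
      using blocks block_close by (intro image_length_deviation_concat) blast
    moreover have "2 * C * real D \<le> d * real (length u)"
    proof -
      have "2 * C * real D / d \<le> real (nat \<lceil>2 * C * real D / d\<rceil>)"
        by (rule real_nat_ceiling_ge)
      also have "\<dots> \<le> real (length u)"
        using \<open>L \<le> length u\<close> by (simp add: L_def)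
      finally show ?thesis
        using \<open>d > 0\<close> by (simp add: pos_divide_le_eq mult.commute)
    qed
    moreover have "?dev u \<le> ?dev p + ?dev (concat ws) + ?dev s"
      unfolding u by (simp add: image_length_append distrib_left)
    moreover have "d * real (length (concat ws)) \<le> d * real (length u)"
      unfolding u using \<open>d > 0\<close> by simp
    moreover have "\<delta> * real (length u) = 2 * (d * real (length u))"
      by (simp add: d_def)
    ultimately show ?thesis
      using short[OF \<open>length p \<le> D\<close>] short[OF \<open>length s \<le> D\<close>] by linarith
  qed
  then show ?thesis by (rule that)
qed


lemma subst_preimage_length_window:
  assumes "0 < \<eta>" and "\<eta> < pf_eigenvalue (subst_matrix \<theta>)"
  obtains N0 where "\<And>N u w. N0 \<le> N \<Longrightarrow> u \<in> language \<theta> \<Longrightarrow> w \<in> subst_word \<theta> u \<Longrightarrow> length w = N \<Longrightarrow>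
    \<lceil>real N / (pf_eigenvalue (subst_matrix \<theta>) + \<eta>)\<rceil> \<le> int (length u) \<and>
    int (length u) \<le> \<lfloor>real N / (pf_eigenvalue (subst_matrix \<theta>) - \<eta>)\<rfloor>"
proof -
  define K where "K = Max (range (ell1 \<theta>))"
  have "0 < ell1 \<theta> undefined" using rs by (rule ell1_pos)
  also have "\<dots> \<le> K" unfolding K_def by (rule Max_ge) auto
  finally have "0 < K" .
  obtain L where L: "\<And>u. u \<in> language \<theta> \<Longrightarrow> L \<le> length u \<Longrightarrow>
      \<bar>real (image_length \<theta> u) - pf_eigenvalue (subst_matrix \<theta>) * real (length u)\<bar> \<le> \<eta> * real (length u)"
    using legal_image_length_close[OF \<open>0 < \<eta>\<close>] by blast
  have "\<lceil>real N / (pf_eigenvalue (subst_matrix \<theta>) + \<eta>)\<rceil> \<le> int (length u) \<and>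
      int (length u) \<le> \<lfloor>real N / (pf_eigenvalue (subst_matrix \<theta>) - \<eta>)\<rfloor>"
    if "K * L \<le> N" "u \<in> language \<theta>" "w \<in> subst_word \<theta> u" "length w = N" for N u w
  proof -
    have "image_length \<theta> u = N" using length_subst_word[OF rs sc that(3)] that(4) by simp
    then have "K * L \<le> K * length u" using image_length_le[of \<theta> u, folded K_def] that(1) by linarith
    then have "L \<le> length u" using \<open>0 < K\<close> by simp
    then show ?thesis
      using L[OF that(2)] \<open>image_length \<theta> u = N\<close> assms by (intro ceiling_floor_window) auto
  qed
  then show ?thesis by (rule that)
qed
end

theorem mainTheorem5:
  fixes \<theta> :: "'a::finite \<Rightarrow> 'a list set" and eps :: real
  defines "lam \<equiv> pf_eigenvalue (subst_matrix \<theta>)"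
    and "n \<equiv> card (UNIV :: 'a set)"
    and "K \<equiv> Max (range (ell1 \<theta>))"
  assumes "random_substitution \<theta>"
    and "semi_compatible \<theta>"
    and "primitive_subst \<theta>"
    and "eps > 0"
    and "lam > eps * real n * real K"
  shows "\<exists>N0::nat. \<forall>N\<ge>N0.
           subst_set \<theta> (language \<theta>) \<inter> language_len \<theta> N \<subseteq>
           (\<Union>m \<in> {m::nat. \<lceil>real N / (lam + eps * real n * real K)\<rceil> \<le> int m
                          \<and> int m \<le> \<lfloor>real N / (lam - eps * real n * real K)\<rfloor>}.
              subst_set \<theta> (language_len \<theta> m))"
proof -
  have "0 < ell1 \<theta> undefined" using assms(4) by (rule ell1_pos)
  also have "\<dots> \<le> K" unfolding K_def by (rule Max_ge) auto
  finally have "0 < eps * real n * real K" using assms(7) by (simp add: n_def)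
  then obtain N0 where window: "\<And>N u w. N0 \<le> N \<Longrightarrow> u \<in> language \<theta> \<Longrightarrow> w \<in> subst_word \<theta> u \<Longrightarrow>
      length w = N \<Longrightarrow> \<lceil>real N / (lam + eps * real n * real K)\<rceil> \<le> int (length u) \<and>
        int (length u) \<le> \<lfloor>real N / (lam - eps * real n * real K)\<rfloor>"
    using subst_preimage_length_window[OF assms(4-6)] assms(8) unfolding lam_def by blast
  show ?thesis
  proof (intro exI[of _ N0] allI impI subsetI)
    fix N w assume "N0 \<le> N" and "w \<in> subst_set \<theta> (language \<theta>) \<inter> language_len \<theta> N"
    then obtain u where "u \<in> language \<theta>" "w \<in> subst_word \<theta> u" "length w = N"
      by (auto simp: subst_set_def language_len_def)
    with window[OF \<open>N0 \<le> N\<close>] show "w \<in> (\<Union>m \<in> {m. \<lceil>real N / (lam + eps * real n * real K)\<rceil> \<le> int m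
        \<and> int m \<le> \<lfloor>real N / (lam - eps * real n * real K)\<rfloor>}. subst_set \<theta> (language_len \<theta> m))"
      by (auto simp: subst_set_def language_len_def)
  qed
qed

end
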